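(* Let $n\geq 600$ and let $\sigma$ be a permutation of $[n]$. Then the family $\mathcal D_{n,\overline{\sigma}}$ is $\left(\frac n{30},\frac n4\right)$-spread.
   Context: Permutations of $[n]$ are identified with their graphs $\{(i,\pi(i))\}\subset[n]^2$; two permutations intersect if they agree at some point. $\mathcal D_{n,\overline{\sigma}}$ is the family of derangements (fixed-point-free permutations) of $[n]$ that do not intersect $\sigma$. For a family $\mathcal{F}$ of subsets of $[n]^2$ and $X\subset[n]^2$, $\mathcal{F}(X):=\{F\setminus X: X\subset F\in\mathcal{F}\}$; $\mathcal{F}$ is $r$-spread if $|\mathcal{F}(X)|\le r^{-|X|}|\mathcal{F}|$ for all $X$, and $(r,q)$-spread if $\mathcal{F}(A)$ is $r$-spread for every $A$ with $|A|\le q$. *)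

theory Defs
  imports Complex_Main "HOL-Combinatorics.Permutations"
begin

definition graph_on :: "nat \<Rightarrow> (nat \<Rightarrow> nat) \<Rightarrow> (nat \<times> nat) set" where
  "graph_on n \<pi> = {(i, \<pi> i) | i. i \<in> {1..n}}"

definition derangements_avoiding :: "nat \<Rightarrow> (nat \<Rightarrow> nat) \<Rightarrow> (nat \<times> nat) set set" where
  "derangements_avoiding n \<sigma> =
     {graph_on n \<pi> | \<pi>. \<pi> permutes {1..n} \<and> (\<forall>i\<in>{1..n}. \<pi> i \<noteq> i)
                        \<and> graph_on n \<pi> \<inter> graph_on n \<sigma> = {}}"

definition link :: "'a set set \<Rightarrow> 'a set \<Rightarrow> 'a set set" where
  "link \<F> X = {F - X | F. F \<in> \<F> \<and> X \<subseteq> F}"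

definition spread :: "real \<Rightarrow> 'a set set \<Rightarrow> bool" where
  "spread r \<F> \<longleftrightarrow> (\<forall>X. real (card (link \<F> X)) \<le> inverse r ^ card X * real (card \<F>))"

definition spread2 :: "real \<Rightarrow> real \<Rightarrow> 'a set set \<Rightarrow> bool" where
  "spread2 r q \<F> \<longleftrightarrow> (\<forall>A. real (card A) \<le> q \<longrightarrow> spread r (link \<F> A))"

end

theory Submission
  imports Defs
begin

(* Write N(B) for the number of derangements of [n] avoiding sigma whose graph contains B; the link
   condition for A and X amounts to N(A \<union> X) \<le> (30/n)^|X| N(A).  Switching: if pi extends
   B \<union> {(i, j)} and row i is free in B, then pi \<circ> (i k) extends B and is again admissible for
   all but |B| + 4 values of k, and (pi, k) can be recovered from it since k is the preimage of j;
   so (n - |B| - 4) N(B \<union> {(i, j)}) \<le> N(B).  Adding the points of X one at a time, N(A \<union> X)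
   times the product of the factors n - |A| - t - 4 (t < |X|) is at most N(A).  For |A| \<le> n/4
   this product is at least (n/30)^|X|: the factors stay above n/30 until they drop below it for
   good, and the complete product is (n - |A| - 4)!, which is large enough because m! \<ge> (m/e)^m. *)

lemma card_link: "card (link \<F> X) = card {F \<in> \<F>. X \<subseteq> F}"
proof -
  have "link \<F> X = (\<lambda>F. F - X) ` {F \<in> \<F>. X \<subseteq> F}"
    unfolding link_def by auto
  moreover have "inj_on (\<lambda>F. F - X) {F \<in> \<F>. X \<subseteq> F}"
    by (rule inj_onI) blast
  ultimately show ?thesis by (simp add: card_image)
qed

lemma link_link:
  assumes "A \<inter> X = {}"
  shows "link (link \<F> A) X = link \<F> (A \<union> X)"
proof (intro equalityI subsetI)
  fix Y assume "Y \<in> link (link \<F> A) X"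
  then obtain F where "F \<in> \<F>" "A \<subseteq> F" "X \<subseteq> F - A" "Y = F - A - X"
    unfolding link_def by blast
  moreover have "Y = F - (A \<union> X)"
    using \<open>Y = F - A - X\<close> by blast
  ultimately show "Y \<in> link \<F> (A \<union> X)"
    unfolding link_def by blast
next
  fix Y assume "Y \<in> link \<F> (A \<union> X)"
  then obtain F where "F \<in> \<F>" "A \<union> X \<subseteq> F" "Y = F - (A \<union> X)"
    unfolding link_def by blast
  with assms have "F - A \<in> link \<F> A" "X \<subseteq> F - A" "Y = F - A - X"
    unfolding link_def by auto
  then show "Y \<in> link (link \<F> A) X"
    unfolding link_def by blast
qed

lemma link_link_eq_empty: "A \<inter> X \<noteq> {} \<Longrightarrow> link (link \<F> A) X = {}"
  unfolding link_def by auto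

lemma spread2I:
  assumes "0 \<le> r"
    and "\<And>A X. real (card A) \<le> q \<Longrightarrow> A \<inter> X = {} \<Longrightarrow>
           real (card {F \<in> \<F>. A \<union> X \<subseteq> F}) \<le> inverse r ^ card X * real (card {F \<in> \<F>. A \<subseteq> F})"
  shows "spread2 r q \<F>"
  unfolding spread2_def spread_def
proof (intro allI impI)
  fix A X :: "'a set"
  assume "real (card A) \<le> q"
  show "real (card (link (link \<F> A) X)) \<le> inverse r ^ card X * real (card (link \<F> A))"
  proof (cases "A \<inter> X = {}")
    case True
    then show ?thesis
      using assms(2)[OF \<open>real (card A) \<le> q\<close>] by (simp add: link_link card_link)
  next
    case False
    then show ?thesis
      using \<open>0 \<le> r\<close> by (simp add: link_link_eq_empty)
  qed
qed

definition avoiding_perms :: "nat \<Rightarrow> (nat \<Rightarrow> nat) \<Rightarrow> (nat \<Rightarrow> nat) set" where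
  "avoiding_perms n \<sigma> = {\<pi>. \<pi> permutes {1..n} \<and> (\<forall>i\<in>{1..n}. \<pi> i \<noteq> i \<and> \<pi> i \<noteq> \<sigma> i)}"

definition extensions :: "nat \<Rightarrow> (nat \<Rightarrow> nat) \<Rightarrow> (nat \<times> nat) set \<Rightarrow> (nat \<Rightarrow> nat) set" where
  "extensions n \<sigma> B = {\<pi> \<in> avoiding_perms n \<sigma>. B \<subseteq> graph_on n \<pi>}"

lemma mem_graph_on_iff: "(a, b) \<in> graph_on n \<pi> \<longleftrightarrow> a \<in> {1..n} \<and> b = \<pi> a"
  unfolding graph_on_def by auto

lemma graph_on_eq_image: "graph_on n \<pi> = (\<lambda>i. (i, \<pi> i)) ` {1..n}"
  unfolding graph_on_def by auto

lemma finite_graph_on: "finite (graph_on n \<pi>)"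
  by (simp add: graph_on_eq_image)

lemma card_graph_on_le: "card (graph_on n \<pi>) \<le> n"
  using card_image_le[of "{1..n}" "\<lambda>i. (i, \<pi> i)"] by (simp add: graph_on_eq_image)

lemma inj_on_graph_on: "inj_on (graph_on n) {\<pi>. \<pi> permutes {1..n}}"
proof (rule inj_onI, rule ext)
  fix \<pi> \<rho> x
  assume \<pi>: "\<pi> \<in> {\<pi>. \<pi> permutes {1..n}}" and \<rho>: "\<rho> \<in> {\<pi>. \<pi> permutes {1..n}}"
    and eq: "graph_on n \<pi> = graph_on n \<rho>"
  show "\<pi> x = \<rho> x"
  proof (cases "x \<in> {1..n}")
    case True
    then show ?thesis using eq mem_graph_on_iff by metis
  next
    case False
    then show ?thesis using \<pi> \<rho> by (simp add: permutes_not_in)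
  qed
qed

lemma finite_avoiding_perms: "finite (avoiding_perms n \<sigma>)"
  by (rule finite_subset[OF _ finite_permutations[of "{1..n}"]]) (auto simp: avoiding_perms_def)

lemma derangements_avoiding_eq_image: "derangements_avoiding n \<sigma> = graph_on n ` avoiding_perms n \<sigma>"
proof -
  have "graph_on n \<pi> \<inter> graph_on n \<sigma> = {} \<longleftrightarrow> (\<forall>i\<in>{1..n}. \<pi> i \<noteq> \<sigma> i)" for \<pi>
    unfolding graph_on_def by blast
  then show ?thesis
    unfolding derangements_avoiding_def avoiding_perms_def by blast
qed

lemma card_supersets_derangements_avoiding:
  "card {F \<in> derangements_avoiding n \<sigma>. B \<subseteq> F} = card (extensions n \<sigma> B)"
proof -
  have "{F \<in> derangements_avoiding n \<sigma>. B \<subseteq> F} = graph_on n ` extensions n \<sigma> B"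
    unfolding derangements_avoiding_eq_image extensions_def by blast
  moreover have "inj_on (graph_on n) (extensions n \<sigma> B)"
    by (rule inj_on_subset[OF inj_on_graph_on]) (auto simp: extensions_def avoiding_perms_def)
  ultimately show ?thesis by (simp add: card_image)
qed

lemma finite_extensions: "finite (extensions n \<sigma> B)"
  using finite_avoiding_perms by (simp add: extensions_def)

lemma card_extensions_antimono: "B \<subseteq> C \<Longrightarrow> card (extensions n \<sigma> C) \<le> card (extensions n \<sigma> B)"
  by (rule card_mono[OF finite_extensions]) (auto simp: extensions_def)

lemma extensions_ne_empty_imp_finite_card_le:
  assumes "extensions n \<sigma> B \<noteq> {}"
  shows "finite B" and "card B \<le> n"
proof -
  from assms obtain \<pi> where "B \<subseteq> graph_on n \<pi>"
    by (auto simp: extensions_def)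
  then show "finite B"
    using finite_graph_on finite_subset by blast
  show "card B \<le> n"
    using card_mono[OF finite_graph_on \<open>B \<subseteq> graph_on n \<pi>\<close>] card_graph_on_le[of n \<pi>] by simp
qed

lemma extensions_insert_eq_empty:
  "(i, j') \<in> B \<Longrightarrow> j \<noteq> j' \<Longrightarrow> extensions n \<sigma> (insert (i, j) B) = {}"
  by (auto simp: extensions_def mem_graph_on_iff)

lemma inj_on_switch: "inj_on (\<lambda>(\<pi>, k). \<pi> \<circ> transpose i k) {(\<pi>, k). inj \<pi> \<and> \<pi> i = j}"
proof (rule inj_onI, clarsimp)
  fix \<pi> k \<rho> k'
  assume eq: "\<pi> \<circ> transpose i k = \<rho> \<circ> transpose i k'" and "inj \<pi>" "\<rho> i = \<pi> i"
  have "(\<pi> \<circ> transpose i k) k' = (\<rho> \<circ> transpose i k') k'"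
    using eq by simp
  also have "\<dots> = (\<pi> \<circ> transpose i k) k"
    using \<open>\<rho> i = \<pi> i\<close> by simp
  finally have "k' = k"
    using \<open>inj \<pi>\<close> by (metis inj_compose inj_transpose injD)
  with eq show "\<pi> = \<rho> \<and> k = k'"
    by (metis comp_assoc comp_id transpose_comp_involutory)
qed

lemma switch_mem_extensions:
  assumes \<sigma>: "\<sigma> permutes {1..n}" and \<pi>: "\<pi> \<in> extensions n \<sigma> (insert (i, j) B)"
    and i: "i \<notin> fst ` B"
    and k: "k \<in> {1..n} - (fst ` B \<union> {j, inv \<pi> i, inv \<pi> (\<sigma> i), inv \<sigma> j})"
  shows "\<pi> \<circ> transpose i k \<in> extensions n \<sigma> B"
proof -
  have \<pi>_perm: "\<pi> permutes {1..n}" and \<pi>_avoids: "\<forall>x\<in>{1..n}. \<pi> x \<noteq> x \<and> \<pi> x \<noteq> \<sigma> x"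
    and B: "B \<subseteq> graph_on n \<pi>" and i_range: "i \<in> {1..n}" and j: "\<pi> i = j"
    using \<pi> by (auto simp: extensions_def avoiding_perms_def mem_graph_on_iff)
  have k_range: "k \<in> {1..n}" and "k \<notin> fst ` B" "k \<noteq> j"
    and "k \<noteq> inv \<pi> i" "k \<noteq> inv \<pi> (\<sigma> i)" "k \<noteq> inv \<sigma> j"
    using k by auto
  then have k_avoids: "\<pi> k \<noteq> i" "\<pi> k \<noteq> \<sigma> i" "\<sigma> k \<noteq> j"
    using permutes_inv_eq[OF \<pi>_perm] permutes_inv_eq[OF \<sigma>] by metis+
  have "\<pi> \<circ> transpose i k permutes {1..n}"
    by (rule permutes_compose[OF permutes_swap_id[OF i_range k_range] \<pi>_perm])
  moreover have "(\<pi> \<circ> transpose i k) x \<noteq> x \<and> (\<pi> \<circ> transpose i k) x \<noteq> \<sigma> x" if "x \<in> {1..n}" for x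
    using \<pi>_avoids that i_range k_range j \<open>k \<noteq> j\<close> k_avoids by (auto simp: transpose_def)
  moreover have "B \<subseteq> graph_on n (\<pi> \<circ> transpose i k)"
  proof
    fix b assume "b \<in> B"
    moreover from this have "fst b \<noteq> i" "fst b \<noteq> k"
      using i \<open>k \<notin> fst ` B\<close> by force+
    ultimately show "b \<in> graph_on n (\<pi> \<circ> transpose i k)"
      using B by (cases b) (force simp: mem_graph_on_iff)
  qed
  ultimately show ?thesis
    by (simp add: extensions_def avoiding_perms_def)
qed

lemma card_extensions_insert_le:
  assumes \<sigma>: "\<sigma> permutes {1..n}" and "finite B" "e \<notin> B"
  shows "(n - card B - 4) * card (extensions n \<sigma> (insert e B)) \<le> card (extensions n \<sigma> B)"
proof -
  obtain i j where e: "e = (i, j)" by fastforce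
  show ?thesis
  proof (cases "i \<in> fst ` B")
    case True
    then obtain j' where "(i, j') \<in> B" by force
    moreover from this have "j \<noteq> j'" using \<open>e \<notin> B\<close> e by auto
    ultimately show ?thesis using extensions_insert_eq_empty e by simp
  next
    case False
    let ?S = "extensions n \<sigma> (insert e B)"
    define K where "K \<pi> = {1..n} - (fst ` B \<union> {j, inv \<pi> i, inv \<pi> (\<sigma> i), inv \<sigma> j})" for \<pi>
    have card_K: "n - card B - 4 \<le> card (K \<pi>)" for \<pi>
    proof -
      have "card (fst ` B \<union> {j, inv \<pi> i, inv \<pi> (\<sigma> i), inv \<sigma> j})
          \<le> card (fst ` B) + card {j, inv \<pi> i, inv \<pi> (\<sigma> i), inv \<sigma> j}"
        by (rule card_Un_le)
      also have "\<dots> \<le> card B + 4"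
        using card_image_le[OF \<open>finite B\<close>, of fst]
          card_length[of "[j, inv \<pi> i, inv \<pi> (\<sigma> i), inv \<sigma> j]"] by simp
      finally have "card (fst ` B \<union> {j, inv \<pi> i, inv \<pi> (\<sigma> i), inv \<sigma> j}) \<le> card B + 4" .
      moreover have "card {1..n} - card (fst ` B \<union> {j, inv \<pi> i, inv \<pi> (\<sigma> i), inv \<sigma> j}) \<le> card (K \<pi>)"
        unfolding K_def by (rule diff_card_le_card_Diff) (simp add: \<open>finite B\<close>)
      ultimately show ?thesis by simp
    qed
    have "card ?S * (n - card B - 4) \<le> (\<Sum>\<pi>\<in>?S. card (K \<pi>))"
      using sum_mono[of ?S "\<lambda>_. n - card B - 4"] card_K by simp
    also have "\<dots> = card (Sigma ?S K)"
      by (simp add: K_def finite_extensions)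
    also have "\<dots> \<le> card (extensions n \<sigma> B)"
    proof (rule card_inj_on_le[OF _ _ finite_extensions])
      have "Sigma ?S K \<subseteq> {(\<pi>, k). inj \<pi> \<and> \<pi> i = j}"
        by (auto simp: e extensions_def avoiding_perms_def mem_graph_on_iff permutes_inj)
      then show "inj_on (\<lambda>(\<pi>, k). \<pi> \<circ> transpose i k) (Sigma ?S K)"
        by (rule inj_on_subset[OF inj_on_switch])
      show "(\<lambda>(\<pi>, k). \<pi> \<circ> transpose i k) ` Sigma ?S K \<subseteq> extensions n \<sigma> B"
        using switch_mem_extensions[OF \<sigma> _ False] by (auto simp: e K_def)
    qed
    finally show ?thesis by (simp add: mult.commute)
  qed
qed

lemma prod_mult_le_of_insert_step:
  fixes N :: "'a set \<Rightarrow> nat" and g :: "nat \<Rightarrow> nat"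
  assumes step: "\<And>B e. finite B \<Longrightarrow> e \<notin> B \<Longrightarrow> g (card B) * N (insert e B) \<le> N B"
    and "finite A" "finite X" "A \<inter> X = {}"
  shows "(\<Prod>t<card X. g (card A + t)) * N (A \<union> X) \<le> N A"
  using \<open>finite X\<close> \<open>A \<inter> X = {}\<close>
proof (induction X rule: finite_induct)
  case empty
  then show ?case by simp
next
  case (insert x X)
  let ?P = "\<Prod>t<card X. g (card A + t)"
  have "card (A \<union> X) = card A + card X"
    using insert \<open>finite A\<close> by (simp add: card_Un_disjoint)
  then have "(\<Prod>t<card (insert x X). g (card A + t)) * N (A \<union> insert x X)
      = ?P * (g (card (A \<union> X)) * N (insert x (A \<union> X)))"
    using insert by (simp add: ac_simps)
  also have "\<dots> \<le> ?P * N (A \<union> X)"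
    using insert \<open>finite A\<close> by (intro mult_left_mono step) auto
  also have "\<dots> \<le> N A"
    using insert by simp
  finally show ?case .
qed

lemma power_le_prod_if_antimono:
  fixes f :: "nat \<Rightarrow> real"
  assumes "antimono f" and nonneg: "\<And>t. 0 \<le> f t" and "0 < q"
    and full: "q ^ m \<le> (\<Prod>t<m. f t)" and "x \<le> m"
  shows "q ^ x \<le> (\<Prod>t<x. f t)"
proof (cases "\<forall>t<x. q \<le> f t")
  case True
  then show ?thesis
    using prod_mono[of "{..<x}" "\<lambda>_. q" f] \<open>0 < q\<close> by simp
next
  case False
  then obtain s where "s < x" "f s < q"
    by (auto simp: not_le)
  have "(\<Prod>t\<in>{x..<m}. f t) \<le> (\<Prod>t\<in>{x..<m}. q)"
  proof (rule prod_mono)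
    fix t assume "t \<in> {x..<m}"
    then have "f t \<le> f s"
      using antimonoD[OF \<open>antimono f\<close>, of s t] \<open>s < x\<close> by simp
    then show "0 \<le> f t \<and> f t \<le> q"
      using nonneg \<open>f s < q\<close> by auto
  qed
  then have tail: "(\<Prod>t\<in>{x..<m}. f t) \<le> q ^ (m - x)"
    by simp
  have "q ^ x * q ^ (m - x) = q ^ m"
    using \<open>x \<le> m\<close> by (simp flip: power_add)
  also have "\<dots> \<le> (\<Prod>t<m. f t)"
    by (rule full)
  also have "\<dots> = (\<Prod>t<x. f t) * (\<Prod>t\<in>{x..<m}. f t)"
    using prod.atLeastLessThan_concat[of 0 x m f] \<open>x \<le> m\<close> by (simp add: atLeast0LessThan)
  also have "\<dots> \<le> (\<Prod>t<x. f t) * q ^ (m - x)"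
    using tail by (intro mult_left_mono) (simp_all add: prod_nonneg nonneg)
  finally have "q ^ x * q ^ (m - x) \<le> (\<Prod>t<x. f t) * q ^ (m - x)" .
  then show ?thesis
    using \<open>0 < q\<close> by simp
qed

lemma power_div_fact_le_exp:
  fixes x :: real
  assumes "0 \<le> x"
  shows "x ^ k / fact k \<le> exp x"
proof -
  have "(\<lambda>n. x ^ n / fact n) sums exp x"
    using exp_converges[of x] by (simp add: scaleR_conv_of_real divide_inverse mult.commute)
  then have "(\<Sum>n\<in>{k}. x ^ n / fact n) \<le> (\<Sum>n. x ^ n / fact n)"
    using assms by (intro sum_le_suminf) (auto simp: sums_iff)
  with \<open>(\<lambda>n. x ^ n / fact n) sums exp x\<close> show ?thesis
    by (simp add: sums_iff)
qed

lemma power4_le_2_power: "16 \<le> m \<Longrightarrow> m ^ 4 \<le> (2 ^ m :: nat)"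
proof (induction m rule: dec_induct)
  case base
  then show ?case by simp
next
  case (step m)
  have "(16 * (m + 1)) ^ 4 \<le> (17 * m) ^ 4"
    using step by (intro power_mono) simp_all
  then have "16 ^ 4 * (m + 1) ^ 4 \<le> 17 ^ 4 * m ^ 4"
    by (simp only: power_mult_distrib)
  then have "65536 * (m + 1) ^ 4 \<le> 83521 * m ^ 4"
    by simp
  then have "(m + 1) ^ 4 \<le> 2 * m ^ 4"
    by linarith
  also have "\<dots> \<le> 2 * 2 ^ m"
    using step by simp
  finally show ?case by simp
qed

lemma power_add4_le_fact:
  fixes q :: real
  assumes "0 \<le> q" "2 * exp 1 * q \<le> real m" "16 \<le> m"
  shows "q ^ (m + 4) \<le> fact m"
proof -
  have "1 * q \<le> (2 * exp 1) * q"
    using \<open>0 \<le> q\<close> one_le_exp_iff[of 1] by (intro mult_right_mono) linarith+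
  then have "q \<le> real m"
    using assms by linarith
  have "q ^ (m + 4) = q ^ 4 * q ^ m"
    by (simp add: power_add)
  also have "\<dots> \<le> real m ^ 4 * q ^ m"
    using \<open>0 \<le> q\<close> \<open>q \<le> real m\<close> by (intro mult_right_mono power_mono) simp_all
  also have "\<dots> \<le> 2 ^ m * q ^ m"
    using power4_le_2_power[OF \<open>16 \<le> m\<close>] \<open>0 \<le> q\<close>
    by (intro mult_right_mono) (simp_all, metis of_nat_le_iff of_nat_numeral of_nat_power)
  also have "\<dots> = (2 * q) ^ m"
    by (simp add: power_mult_distrib)
  also have "\<dots> \<le> (real m / exp 1) ^ m"
    using assms by (intro power_mono) (simp_all add: field_simps)
  also have "\<dots> \<le> fact m"
    using power_div_fact_le_exp[of "real m" m]
    by (simp add: power_divide field_simps exp_of_nat_mult[symmetric])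
  finally show ?thesis .
qed

lemma power_le_prod_switch_factors:
  fixes n a x :: nat
  assumes "600 \<le> n" "4 * a \<le> n" "x \<le> n - a"
  shows "(real n / 30) ^ x \<le> real (\<Prod>t<x. max 1 (n - (a + t) - 4))"
proof -
  define m where "m = n - a - 4"
  define f where "f t = real (max 1 (m - t))" for t
  have m: "real m \<ge> 3 * real n / 4 - 4"
    using assms by (simp add: m_def)
  have "real n * exp 1 \<le> real n * 3"
    by (intro mult_left_mono exp_le) simp
  then have "real n * exp 1 \<le> real m * 15"
    using m assms(1) by linarith
  then have "(real n / 30) ^ (m + 4) \<le> fact m"
    using m assms(1) by (intro power_add4_le_fact) simp_all
  also have "fact m = (\<Prod>t<m. f t) * (\<Prod>t\<in>{m..<m + 4}. f t)"
    by (simp add: f_def fact_prod_rev atLeast0LessThan)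
  also have "\<dots> = (\<Prod>t<m + 4. f t)"
    using prod.atLeastLessThan_concat[of 0 m "m + 4" f] by (simp add: atLeast0LessThan)
  finally have full: "(real n / 30) ^ (m + 4) \<le> (\<Prod>t<m + 4. f t)" .
  have "antimono f"
    by (rule antimonoI) (simp add: f_def)
  then have "(real n / 30) ^ x \<le> (\<Prod>t<x. f t)"
    by (rule power_le_prod_if_antimono[OF _ _ _ full]) (use assms in \<open>simp_all add: f_def m_def\<close>)
  also have "\<dots> = real (\<Prod>t<x. max 1 (n - (a + t) - 4))"
    by (simp add: f_def m_def diff_diff_add ac_simps)
  finally show ?thesis .
qed

lemma card_extensions_union_le:
  assumes "600 \<le> n" and \<sigma>: "\<sigma> permutes {1..n}" and "4 * card A \<le> n" "A \<inter> X = {}"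
  shows "(real n / 30) ^ card X * card (extensions n \<sigma> (A \<union> X)) \<le> card (extensions n \<sigma> A)"
proof (cases "extensions n \<sigma> (A \<union> X) = {}")
  case True
  then show ?thesis by simp
next
  case False
  then have "finite (A \<union> X)" "card (A \<union> X) \<le> n"
    using extensions_ne_empty_imp_finite_card_le by blast+
  then have "finite A" "finite X" "card X \<le> n - card A"
    using \<open>A \<inter> X = {}\<close> by (simp_all add: card_Un_disjoint)
  \<comment> \<open>Where n - |B| - 4 truncates to 0, the factor 1 comes from monotonicity instead of switching.\<close>
  define g where "g t = max 1 (n - t - 4)" for t
  have step: "g (card B) * card (extensions n \<sigma> (insert e B)) \<le> card (extensions n \<sigma> B)"
    if "finite B" "e \<notin> B" for B e
    using card_extensions_insert_le[OF \<sigma> that] card_extensions_antimono[of B "insert e B"]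
    by (auto simp: g_def max_def)
  have iterated: "(\<Prod>t<card X. g (card A + t)) * card (extensions n \<sigma> (A \<union> X))
      \<le> card (extensions n \<sigma> A)"
    by (rule prod_mult_le_of_insert_step[of g "\<lambda>B. card (extensions n \<sigma> B)" A X])
      (fact step \<open>finite A\<close> \<open>finite X\<close> \<open>A \<inter> X = {}\<close>)+
  have "(real n / 30) ^ card X \<le> real (\<Prod>t<card X. g (card A + t))"
    using power_le_prod_switch_factors[OF \<open>600 \<le> n\<close> \<open>4 * card A \<le> n\<close> \<open>card X \<le> n - card A\<close>]
    by (simp add: g_def)
  then have "(real n / 30) ^ card X * card (extensions n \<sigma> (A \<union> X))
      \<le> real (\<Prod>t<card X. g (card A + t)) * card (extensions n \<sigma> (A \<union> X))"
    by (rule mult_right_mono) simp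
  also have "\<dots> \<le> card (extensions n \<sigma> A)"
    using iterated by (simp only: of_nat_mult[symmetric] of_nat_le_iff)
  finally show ?thesis .
qed

theorem lemma15:
  fixes n :: nat and \<sigma> :: "nat \<Rightarrow> nat"
  assumes "n \<ge> 600" and "\<sigma> permutes {1..n}"
  shows "spread2 (real n / 30) (real n / 4) (derangements_avoiding n \<sigma>)"
proof (rule spread2I)
  fix A X :: "(nat \<times> nat) set"
  assume "real (card A) \<le> real n / 4" and "A \<inter> X = {}"
  then have "(real n / 30) ^ card X * card (extensions n \<sigma> (A \<union> X)) \<le> card (extensions n \<sigma> A)"
    using assms by (intro card_extensions_union_le) simp_all
  moreover have "0 < real n / 30"
    using assms by simp
  ultimately show "real (card {F \<in> derangements_avoiding n \<sigma>. A \<union> X \<subseteq> F})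
      \<le> inverse (real n / 30) ^ card X * real (card {F \<in> derangements_avoiding n \<sigma>. A \<subseteq> F})"
    unfolding card_supersets_derangements_avoiding by (simp add: power_inverse field_simps)
qed simp

end
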